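(* Let $k\geq 1$, $t\geq k$ and $\frac{1}{2}\leq p\leq 1$ be real numbers. Then for every real $x$ with $0\leq x\leq \frac{1}{2}$, $$(1+t)^x\geq p^x+\frac{(1+k)^x-p^x}{k^x}\,t^x .$$ *)

theory Defs
  imports Complex_Main
begin

end

theory Submission
  imports Defs
begin

text \<open>The ratio \<open>((1 + s) powr x - p powr x) / s powr x\<close> is nondecreasing for \<open>s \<ge> 1\<close>:
  its derivative is \<open>x * s powr (-x - 1) * (p powr x - (1 + s) powr (x - 1))\<close>, and
  \<open>(1 + s) powr (x - 1) \<le> 2 powr (x - 1) \<le> 2 powr (-x) \<le> p powr x\<close> because
  \<open>x \<le> 1/2 \<le> p\<close>. Comparing the ratio at \<open>k\<close> and at \<open>t\<close> and multiplying by
  \<open>t powr x\<close> gives the inequality.\<close>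

lemma one_plus_powr_pred_le_powr:
  fixes s p x :: real
  assumes "s \<ge> 1" "1/2 \<le> p" "0 \<le> x" "x \<le> 1/2"
  shows "(1 + s) powr (x - 1) \<le> p powr x"
proof -
  have "(1 + s) powr (x - 1) \<le> 2 powr (x - 1)"
    using assms by (intro powr_mono2') auto
  also have "\<dots> \<le> 2 powr (-x)"
    using assms by (intro powr_mono) auto
  also have "\<dots> = (1/2) powr x"
    by (simp add: powr_minus_divide powr_divide)
  also have "\<dots> \<le> p powr x"
    using assms by (intro powr_mono2) auto
  finally show ?thesis .
qed

lemma has_real_derivative_powr_excess_ratio:
  fixes x c s :: real
  assumes "s > 0"
  shows "((\<lambda>s. ((1 + s) powr x - c) / s powr x) has_real_derivative
           x * s powr (-x - 1) * (c - (1 + s) powr (x - 1))) (at s)"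
proof -
  have "((\<lambda>s. ((1 + s) powr x - c) / s powr x) has_real_derivative
          (x * (1 + s) powr (x - 1) * s powr x - ((1 + s) powr x - c) * (x * s powr (x - 1)))
            / (s powr x * s powr x)) (at s)"
    using assms by (auto intro!: derivative_eq_intros)
  moreover have "(x * (1 + s) powr (x - 1) * s powr x - ((1 + s) powr x - c) * (x * s powr (x - 1)))
            / (s powr x * s powr x) = x * s powr (-x - 1) * (c - (1 + s) powr (x - 1))"
  proof -
    have "s powr (-x - 1) = s powr (-(x - 1 + 2))"
      by (rule arg_cong[where f = "(powr) s"]) simp
    then have neg: "s powr (-x - 1) = 1 / (s * s * s powr (x - 1))"
      using assms by (simp only: powr_minus_divide powr_add) (simp add: power2_eq_square)
    have "(1 + s) powr x = (1 + s) * (1 + s) powr (x - 1)" "s powr x = s * s powr (x - 1)"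
      using assms by (simp_all add: powr_mult_base)
    moreover have "s powr (x - 1) > 0"
      using assms by simp
    ultimately show ?thesis
      unfolding neg using assms by (simp add: field_simps)
  qed
  ultimately show ?thesis
    by simp
qed

lemma powr_excess_ratio_mono:
  fixes k t p x :: real
  assumes "1 \<le> k" "k \<le> t" "1/2 \<le> p" "0 \<le> x" "x \<le> 1/2"
  shows "((1 + k) powr x - p powr x) / k powr x \<le> ((1 + t) powr x - p powr x) / t powr x"
proof (rule DERIV_nonneg_imp_nondecreasing[OF \<open>k \<le> t\<close>])
  fix s
  assume "k \<le> s" "s \<le> t"
  then have "s \<ge> 1"
    using assms by simp
  then have "0 \<le> x * s powr (-x - 1) * (p powr x - (1 + s) powr (x - 1))"
    using one_plus_powr_pred_le_powr[of s p x] assms by simp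
  moreover have "((\<lambda>s. ((1 + s) powr x - p powr x) / s powr x) has_real_derivative
                   x * s powr (-x - 1) * (p powr x - (1 + s) powr (x - 1))) (at s)"
    using \<open>s \<ge> 1\<close> by (intro has_real_derivative_powr_excess_ratio) simp
  ultimately show "\<exists>y. ((\<lambda>s. ((1 + s) powr x - p powr x) / s powr x)
                      has_real_derivative y) (at s) \<and> 0 \<le> y"
    by blast
qed

theorem lemma1:
  fixes k t p x :: real
  assumes "k \<ge> 1" and "t \<ge> k" and "1/2 \<le> p" and "p \<le> 1"
    and "0 \<le> x" and "x \<le> 1/2"
  shows "(1 + t) powr x \<ge> p powr x + ((1 + k) powr x - p powr x) / (k powr x) * t powr x"
proof -
  have "t powr x > 0"
    using assms by simp
  have "((1 + k) powr x - p powr x) / k powr x * t powr x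
          \<le> ((1 + t) powr x - p powr x) / t powr x * t powr x"
    using powr_excess_ratio_mono[of k t p x] assms \<open>t powr x > 0\<close>
    by (intro mult_right_mono) auto
  also have "\<dots> = (1 + t) powr x - p powr x"
    using \<open>t powr x > 0\<close> by simp
  finally show ?thesis
    by simp
qed

end
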